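(* Let $\mathbf X_1,\dots,\mathbf X_n$ be i.i.d. samples in $\mathbb{R}^d$ from a continuous density $f$, and let $\hat f_{n,\ell}$ be the partitioned multivariate sample-spacing density estimator defined below. Assume that as $n\to\infty$, $\ell(n)^d=o(n)$ and $m_k/n_k\to 0$ (e.g. $n_k\to\infty$ with $m_k=\lfloor\sqrt{n_k}+1/2\rfloor$). Then $$\lim_{n\to\infty}\int_{\mathbb{R}^d}\hat f_{n,\ell}(\mathbf x)\,d\mathbf x=1.$$
   Context: Multivariate partitioned estimator: for an integer $\ell=\ell(n)$, divide the range $[\min_v X_{v,j},\max_v X_{v,j}]$ of each coordinate $j=1,\dots,d$ into $\ell$ equal-width intervals (width $(\max-\min)/\ell$); products give $\ell^d$ hyperrectangles $P_1,\dots,P_{\ell^d}$. Let $n_k$ be the number of samples in $P_k$, $m_k$ a positive integer spacing parameter, and $x^k_{j,(1)}\le\dots\le x^k_{j,(n_k)}$ the order statistics of the $j$-th coordinates of the samples in $P_k$, with $x^k_{j,(r)}=x^k_{j,(1)}$ for $r<1$ and $x^k_{j,(r)}=x^k_{j,(n_k)}$ for $r>n_k$. Grid points: $\xi^k_{j,a}=\frac{1}{2m_k}\sum_{r=a-m_k}^{a+m_k-1}x^k_{j,(r)}$ for $1\le a\le n_k$, $\xi^k_{j,0}=x^k_{j,(1)}$, $\xi^k_{j,n_k+1}=x^k_{j,(n_k)}$. For $\mathbf x=(x_1,\dots,x_d)$ with $\xi^k_{j,a_j}<x_j\le\xi^k_{j,a_j+1}$ for all $j$ (cell indices $0\le a_j\le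 n_k$), $$\hat f_{n,\ell}(\mathbf x)=\frac{n_k}{n}\prod_{j=1}^d\frac{2m_k}{n_k\,(x^k_{j,(a_j+m_k)}-x^k_{j,(a_j-m_k)})},$$ and $\hat f_{n,\ell}=0$ outside all such cells. Partitions with $n_k\le 1$ are skipped (contribute no density). *)

theory Defs
  imports "HOL-Probability.Probability" "HOL-Library.Landau_Symbols"
begin

text \<open>Order statistic with 1-based index r and clamping:
  x_(r) = x_(1) for r < 1, x_(r) = x_(n_k) for r > n_k.\<close>
definition ostat :: "real list \<Rightarrow> int \<Rightarrow> real" where
  "ostat ys r = sort ys ! (nat (max 1 (min r (int (length ys)))) - 1)"

definition grid :: "nat \<Rightarrow> real list \<Rightarrow> nat \<Rightarrow> real" where
  "grid mk ys a =
     (if a = 0 then ostat ys 1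
      else if a = length ys + 1 then ostat ys (int (length ys))
      else (\<Sum>r\<in>{int a - int mk .. int a + int mk - 1}. ostat ys r) / (2 * real mk))"

text \<open>Index (0-based) of the equal-width interval containing coordinate j of x;
  intervals are [lo + i w, lo + (i+1) w), the last one closed.\<close>
definition bin_index :: "nat \<Rightarrow> (real^'d) list \<Rightarrow> real^'d \<Rightarrow> 'd \<Rightarrow> nat" where
  "bin_index l xs x j =
     (let lo = Min (set (map (\<lambda>v. v $ j) xs));
          hi = Max (set (map (\<lambda>v. v $ j) xs));
          w = (hi - lo) / real l
      in nat (min (int l - 1) \<lfloor>(x $ j - lo) / w\<rfloor>))"

definition part_dens :: "nat \<Rightarrow> nat \<Rightarrow> (real^'d) list \<Rightarrow> real^'d \<Rightarrow> real" where
  "part_dens n mk S x =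
     (let nk = length S;
          col = (\<lambda>j. map (\<lambda>v. v $ j) S);
          incell = (\<lambda>a::'d \<Rightarrow> nat. \<forall>j. a j \<le> nk \<and>
                       grid mk (col j) (a j) < x $ j \<and> x $ j \<le> grid mk (col j) (a j + 1))
      in if nk \<le> 1 then 0
         else if (\<exists>a. incell a) then
           (let a = (THE a. incell a)
            in real nk / real n *
               (\<Prod>j\<in>UNIV. 2 * real mk /
                  (real nk * (ostat (col j) (int (a j) + int mk) - ostat (col j) (int (a j) - int mk)))))
         else 0)"

text \<open>The partitioned multivariate sample-spacing estimator, with l intervals per
  coordinate and spacing rule m (m_k = m n_k).  The cells of distinct hyperrectangles
  are disjoint, so summing the contributions is the pointwise definition.\<close>
definition fhat :: "nat \<Rightarrow> (nat \<Rightarrow> nat) \<Rightarrow> (real^'d) list \<Rightarrow> real^'d \<Rightarrow> real" where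
  "fhat l m xs x =
     (\<Sum>p\<in>{p :: 'd \<Rightarrow> nat. \<forall>j. p j < l}.
        (let S = filter (\<lambda>v. (\<lambda>j. bin_index l xs v j) = p) xs
         in part_dens (length xs) (m (length S)) S x))"

end

theory Submission
  imports Defs
begin

text \<open>
  For a hyperrectangle with \<open>n\<^sub>k \<ge> 2\<close> samples the estimator is a product of one-dimensional
  factors that are constant on the cells of a product grid, so its integral factorises as
  \<open>n\<^sub>k/n\<close> times a product over the coordinates of sums of one-dimensional cell masses.
  Each interior cell of the moving-average grid has mass exactly \<open>1/n\<^sub>k\<close> as soon as the
  coordinate has no ties, and each of the two boundary cells has mass at most \<open>2m\<^sub>k/n\<^sub>k\<close>;
  hence every factor lies between \<open>1 - 1/n\<^sub>k\<close> and \<open>1 + 4m\<^sub>k/n\<^sub>k\<close>.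

  Summing over the \<open>\<ell>\<^sup>d\<close> hyperrectangles, Bernoulli's inequality gives the lower bound
  \<open>1 - d \<ell>\<^sup>d/n\<close>. For the upper bound, \<open>m\<^sub>k/n\<^sub>k \<rightarrow> 0\<close> yields
  \<open>n\<^sub>k (1 + 4m\<^sub>k/n\<^sub>k)\<^sup>d \<le> (1 + \<epsilon>) n\<^sub>k + C\<^sub>\<epsilon>\<close>, so the total is at most
  \<open>1 + \<epsilon> + \<ell>\<^sup>d C\<^sub>\<epsilon>/n\<close>. Both bounds tend to \<open>1\<close> because \<open>\<ell>\<^sup>d = o(n)\<close>.
  Ties occur with probability zero since the samples are independent with a density.
\<close>

section \<open>Order statistics and moving-average grid points\<close>

lemma ostat_index_less: "ys \<noteq> [] \<Longrightarrow> nat (max 1 (min r (int (length ys)))) - 1 < length ys"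
  by (cases ys) auto

lemma ostat_mono:
  assumes "ys \<noteq> []" "r \<le> r'"
  shows "ostat ys r \<le> ostat ys r'"
  unfolding ostat_def using assms ostat_index_less[OF assms(1), of r']
  by (intro sorted_nth_mono) (auto simp: nat_le_iff intro!: diff_le_mono)

lemma ostat_strict_mono:
  assumes "distinct ys" "1 \<le> r" "r < r'" "r' \<le> int (length ys)"
  shows "ostat ys r < ostat ys r'"
proof -
  have "sorted_wrt (<) (sort ys)" using assms(1) by (simp add: strict_sorted_iff)
  then show ?thesis unfolding ostat_def
    by (rule sorted_wrt_nth_less) (use assms in auto)
qed

lemma ostat_clamp: "ostat ys (max 1 (min r (int (length ys)))) = ostat ys r"
  unfolding ostat_def by (simp add: max_def min_def)

lemma ostat_clamp_low: "r \<le> 1 \<Longrightarrow> ostat ys r = ostat ys 1"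
  unfolding ostat_def by (cases ys) auto

lemma ostat_clamp_high: "int (length ys) \<le> r \<Longrightarrow> ostat ys r = ostat ys (int (length ys))"
  unfolding ostat_def by (cases ys) auto

lemma sum_int_interval_shift:
  fixes g :: "int \<Rightarrow> 'a::ab_group_add"
  assumes "lo \<le> hi"
  shows "(\<Sum>r\<in>{lo + 1..hi + 1}. g r) = (\<Sum>r\<in>{lo..hi}. g r) + g (hi + 1) - g lo"
proof -
  have "{lo..hi + 1} = insert (hi + 1) {lo..hi}" "{lo..hi + 1} = insert lo {lo + 1..hi + 1}"
    using assms by auto
  moreover have "(\<Sum>r\<in>insert (hi + 1) {lo..hi}. g r) = g (hi + 1) + (\<Sum>r\<in>{lo..hi}. g r)"
    by (rule sum.insert) auto
  moreover have "(\<Sum>r\<in>insert lo {lo + 1..hi + 1}. g r) = g lo + (\<Sum>r\<in>{lo + 1..hi + 1}. g r)"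
    by (rule sum.insert) auto
  ultimately have "g (hi + 1) + (\<Sum>r\<in>{lo..hi}. g r) = g lo + (\<Sum>r\<in>{lo + 1..hi + 1}. g r)"
    by simp
  then show ?thesis by (simp add: algebra_simps)
qed

lemma grid_window_average:
  "1 \<le> a \<Longrightarrow> a \<le> length ys \<Longrightarrow>
   grid mk ys a = (\<Sum>r\<in>{int a - int mk .. int a + int mk - 1}. ostat ys r) / (2 * real mk)"
  unfolding grid_def by auto

lemma grid_bounds:
  assumes "mk > 0" "ys \<noteq> []" "a \<le> length ys + 1"
  shows "ostat ys (int a - int mk) \<le> grid mk ys a" and "grid mk ys a \<le> ostat ys (int a + int mk - 1)"
proof -
  consider "a = 0" | "1 \<le> a" "a \<le> length ys" | "a = length ys + 1"
    using assms(3) by linarith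
  then have "ostat ys (int a - int mk) \<le> grid mk ys a \<and> grid mk ys a \<le> ostat ys (int a + int mk - 1)"
  proof cases
    case 1
    then show ?thesis
      using assms ostat_mono[OF assms(2), of 0 "int mk - 1"] ostat_clamp_low[of 0 ys]
        ostat_clamp_low[of "- int mk" ys]
      by (simp add: grid_def)
  next
    case 2
    define W where "W = {int a - int mk .. int a + int mk - 1}"
    have card: "card W = 2 * mk" by (simp add: W_def)
    have "ostat ys (int a - int mk) \<le> ostat ys r" "ostat ys r \<le> ostat ys (int a + int mk - 1)"
      if "r \<in> W" for r
      using that assms(2) by (auto simp: W_def intro: ostat_mono)
    then have "real (2 * mk) * ostat ys (int a - int mk) \<le> (\<Sum>r\<in>W. ostat ys r)"
      "(\<Sum>r\<in>W. ostat ys r) \<le> real (2 * mk) * ostat ys (int a + int mk - 1)"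
      using sum_bounded_below[where A=W and f="ostat ys" and K="ostat ys (int a - int mk)"]
        sum_bounded_above[where A=W and f="ostat ys" and K="ostat ys (int a + int mk - 1)"] card
      by auto
    then show ?thesis
      using 2 assms(1) by (simp add: grid_window_average W_def[symmetric] field_simps)
  next
    case 3
    then show ?thesis
      using assms ostat_mono[OF assms(2), of "int a - int mk" "int (length ys)"]
        ostat_clamp_high[of ys "int a + int mk - 1"]
      by (simp add: grid_def)
  qed
  then show "ostat ys (int a - int mk) \<le> grid mk ys a" "grid mk ys a \<le> ostat ys (int a + int mk - 1)"
    by auto
qed

lemma grid_Suc_diff:
  assumes "mk > 0" "1 \<le> a" "a < length ys"
  shows "grid mk ys (a + 1) - grid mk ys a
         = (ostat ys (int a + int mk) - ostat ys (int a - int mk)) / (2 * real mk)"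
proof -
  have "(\<Sum>r\<in>{int (a + 1) - int mk .. int (a + 1) + int mk - 1}. ostat ys r)
      = (\<Sum>r\<in>{int a - int mk .. int a + int mk - 1}. ostat ys r)
        + ostat ys (int a + int mk) - ostat ys (int a - int mk)"
    using sum_int_interval_shift[of "int a - int mk" "int a + int mk - 1" "ostat ys"] assms(1)
    by (simp add: algebra_simps)
  then show ?thesis
    using assms by (simp add: grid_window_average diff_divide_distrib add_divide_distrib)
qed

lemma grid_Suc_mono:
  assumes "mk > 0" "ys \<noteq> []" "a \<le> length ys"
  shows "grid mk ys a \<le> grid mk ys (a + 1)"
proof -
  consider "a = 0" | "1 \<le> a" "a < length ys" | "a = length ys" "a \<ge> 1"
    using assms by linarith
  then show ?thesis
  proof cases
    case 1
    then show ?thesis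
      using grid_bounds(1)[OF assms(1,2), of 1] ostat_clamp_low[of "1 - int mk" ys] assms
      by (simp add: grid_def)
  next
    case 2
    have "0 \<le> (ostat ys (int a + int mk) - ostat ys (int a - int mk)) / (2 * real mk)"
      using ostat_mono[OF assms(2), of "int a - int mk" "int a + int mk"] by simp
    then show ?thesis
      using grid_Suc_diff[OF assms(1) 2] by linarith
  next
    case 3
    then show ?thesis
      using grid_bounds(2)[OF assms(1,2), of a] ostat_clamp_high[of ys "int a + int mk - 1"] assms
      by (simp add: grid_def)
  qed
qed

lemma grid_mono:
  assumes "mk > 0" "ys \<noteq> []" "a \<le> b" "b \<le> length ys + 1"
  shows "grid mk ys a \<le> grid mk ys b"
proof (rule lift_Suc_mono_le_ivl[where f="grid mk ys" and N="{..length ys}"])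
  show "grid mk ys n \<le> grid mk ys (Suc n)" if "n \<in> {..length ys}" for n
    using grid_Suc_mono[OF assms(1,2), of n] that by simp
qed (use assms in auto)

lemma grid_Suc_diff_le:
  assumes "mk > 0" "ys \<noteq> []" "a \<le> length ys"
  shows "grid mk ys (a + 1) - grid mk ys a \<le> ostat ys (int a + int mk) - ostat ys (int a - int mk)"
  using grid_bounds(1)[OF assms(1,2), of a] grid_bounds(2)[OF assms(1,2), of "a + 1"] assms(3)
  by simp

lemma grid_cell_unique:
  assumes "mk > 0" "ys \<noteq> []" "a \<le> length ys" "b \<le> length ys"
    and "grid mk ys a < x" "x \<le> grid mk ys (a + 1)"
    and "grid mk ys b < x" "x \<le> grid mk ys (b + 1)"
  shows "a = b"
proof (rule ccontr)
  assume "a \<noteq> b"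
  then consider "a + 1 \<le> b" | "b + 1 \<le> a" by linarith
  then show False
  proof cases
    case 1
    then have "grid mk ys (a + 1) \<le> grid mk ys b" using assms(1-4) by (intro grid_mono) auto
    then show False using assms(5-8) by linarith
  next
    case 2
    then have "grid mk ys (b + 1) \<le> grid mk ys a" using assms(1-4) by (intro grid_mono) auto
    then show False using assms(5-8) by linarith
  qed
qed

section \<open>One-dimensional cell masses\<close>

text \<open>The integral of the one-dimensional factor of the estimator over the a-th grid cell.\<close>
definition spacing_mass :: "nat \<Rightarrow> real list \<Rightarrow> nat \<Rightarrow> real" where
  "spacing_mass mk ys a = 2 * real mk * (grid mk ys (a + 1) - grid mk ys a) /
     (real (length ys) * (ostat ys (int a + int mk) - ostat ys (int a - int mk)))"

lemma spacing_mass_nonneg: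
  assumes "mk > 0" "ys \<noteq> []" "a \<le> length ys"
  shows "0 \<le> spacing_mass mk ys a"
  using grid_Suc_mono[OF assms] ostat_mono[OF assms(2), of "int a - int mk" "int a + int mk"]
  unfolding spacing_mass_def by (intro divide_nonneg_nonneg mult_nonneg_nonneg) simp_all

lemma spacing_mass_le:
  assumes "mk > 0" "ys \<noteq> []" "a \<le> length ys"
  shows "spacing_mass mk ys a \<le> 2 * real mk / real (length ys)"
proof -
  define g where "g = grid mk ys (a + 1) - grid mk ys a"
  define D where "D = ostat ys (int a + int mk) - ostat ys (int a - int mk)"
  have "0 \<le> g" "g \<le> D"
    using grid_Suc_mono[OF assms] grid_Suc_diff_le[OF assms] by (simp_all add: g_def D_def)
  then have "g / D \<le> 1" by (cases "D = 0") auto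
  then have "2 * real mk / real (length ys) * (g / D) \<le> 2 * real mk / real (length ys)"
    by (intro mult_left_le) simp_all
  then show ?thesis by (simp add: spacing_mass_def g_def D_def)
qed

lemma spacing_mass_interior:
  assumes "mk > 0" "1 \<le> a" "a < length ys"
  shows "spacing_mass mk ys a = (if ostat ys (int a + int mk) = ostat ys (int a - int mk) then 0
                                 else 1 / real (length ys))"
  unfolding spacing_mass_def grid_Suc_diff[OF assms] using assms(1) by auto

lemma spacing_mass_interior_distinct:
  assumes "mk > 0" "1 \<le> a" "a < length ys" "distinct ys"
  shows "spacing_mass mk ys a = 1 / real (length ys)"
proof -
  have "ostat ys (max 1 (min (int a - int mk) (int (length ys))))
      < ostat ys (max 1 (min (int a + int mk) (int (length ys))))"
    using assms by (intro ostat_strict_mono) auto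
  then show ?thesis
    using spacing_mass_interior[OF assms(1-3)] by (simp add: ostat_clamp)
qed

lemma sum_atMost_split_ends:
  fixes g :: "nat \<Rightarrow> 'a::comm_monoid_add"
  assumes "N \<ge> 1"
  shows "(\<Sum>a\<le>N. g a) = g 0 + (\<Sum>a\<in>{1..<N}. g a) + g N"
proof -
  have "{..N} = insert N (insert 0 {1..<N})" using assms by auto
  then show ?thesis using assms by (simp add: ac_simps)
qed

lemma spacing_mass_sum_le:
  assumes "mk > 0" "length ys \<ge> 2"
  shows "(\<Sum>a\<le>length ys. spacing_mass mk ys a) \<le> 1 + 4 * real mk / real (length ys)"
proof -
  define N where "N = length ys"
  have ne: "ys \<noteq> []" using assms by auto
  have "(\<Sum>a\<in>{1..<N}. spacing_mass mk ys a) \<le> real (card {1..<N}) * (1 / real N)"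
    by (rule sum_bounded_above) (use assms in \<open>simp add: spacing_mass_interior N_def\<close>)
  also have "\<dots> \<le> 1" using assms by (simp add: N_def divide_le_eq_1)
  finally show ?thesis
    using sum_atMost_split_ends[of N "spacing_mass mk ys"] assms
      spacing_mass_le[OF assms(1) ne, of 0] spacing_mass_le[OF assms(1) ne, of N]
    by (simp add: N_def)
qed

lemma spacing_mass_sum_ge:
  assumes "mk > 0" "length ys \<ge> 2" "distinct ys"
  shows "1 - 1 / real (length ys) \<le> (\<Sum>a\<le>length ys. spacing_mass mk ys a)"
proof -
  define N where "N = length ys"
  have ne: "ys \<noteq> []" using assms by auto
  have "(\<Sum>a\<in>{1..<N}. spacing_mass mk ys a) = (\<Sum>a\<in>{1..<N}. 1 / real N)"
    using spacing_mass_interior_distinct[OF assms(1) _ _ assms(3)] by (simp add: N_def)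
  also have "\<dots> = (real N - 1) / real N" using assms by (simp add: N_def of_nat_diff)
  also have "\<dots> = 1 - 1 / real N" using ne by (simp add: N_def diff_divide_distrib)
  moreover have "0 \<le> spacing_mass mk ys 0" "0 \<le> spacing_mass mk ys N"
    using spacing_mass_nonneg[OF assms(1) ne] by (simp_all add: N_def)
  ultimately show ?thesis
    using sum_atMost_split_ends[of N "spacing_mass mk ys"] assms unfolding N_def by linarith
qed

section \<open>The integral over one hyperrectangle\<close>

lemma half_open_box_cart:
  fixes lo hi :: "'d::finite \<Rightarrow> real"
  assumes le: "\<And>j. lo j \<le> hi j"
  defines "B \<equiv> {x::real^'d. \<forall>j. lo j < x$j \<and> x$j \<le> hi j}"
  shows "B \<in> sets lborel" "emeasure lborel B < \<infinity>" "measure lborel B = (\<Prod>j\<in>UNIV. hi j - lo j)"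
proof -
  show B: "B \<in> sets lborel" unfolding B_def by measurable
  define a :: "real^'d" where "a = (\<chi> j. lo j)"
  define b :: "real^'d" where "b = (\<chi> j. hi j)"
  have sub: "B \<subseteq> cbox a b" and box_sub: "box a b \<subseteq> B"
    unfolding B_def a_def b_def by (auto simp: mem_box_cart less_le)
  then show "emeasure lborel B < \<infinity>"
    by (metis emeasure_lborel_cbox_finite emeasure_mono order_le_less_trans sets_lborel cbox_borel)
  have "cbox a b - B \<in> null_sets lborel"
    by (rule null_sets_subset[OF null_sets_cbox_Diff_box]) (use B box_sub in auto)
  then have "measure lborel B = measure lborel (cbox a b)"
    using sub measure_Diff_null_set[of "cbox a b" lborel "cbox a b - B"]
    by (simp add: Diff_Diff_Int inf.absorb2)
  also have "\<dots> = (\<Prod>j\<in>UNIV. hi j - lo j)"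
    using le by (simp add: content_cbox_cart a_def b_def interval_eq_empty_cart(2) not_less)
  finally show "measure lborel B = (\<Prod>j\<in>UNIV. hi j - lo j)" .
qed

definition sample_coords :: "(real^'d) list \<Rightarrow> 'd \<Rightarrow> real list" where
  "sample_coords S j = map (\<lambda>v. v $ j) S"

definition cell :: "nat \<Rightarrow> (real^'d) list \<Rightarrow> ('d \<Rightarrow> nat) \<Rightarrow> (real^'d) set" where
  "cell mk S a = {x. \<forall>j. grid mk (sample_coords S j) (a j) < x$j \<and> x$j \<le> grid mk (sample_coords S j) (a j + 1)}"

definition cell_value :: "nat \<Rightarrow> nat \<Rightarrow> (real^'d) list \<Rightarrow> ('d \<Rightarrow> nat) \<Rightarrow> real" where
  "cell_value n mk S a = real (length S) / real n *
     (\<Prod>j\<in>UNIV. 2 * real mk / (real (length S) *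
        (ostat (sample_coords S j) (int (a j) + int mk) - ostat (sample_coords S j) (int (a j) - int mk))))"

lemma cell_lborel:
  fixes S :: "(real^'d::finite) list"
  assumes "mk > 0" "S \<noteq> []" "a \<in> Pi\<^sub>E UNIV (\<lambda>_. {..length S})"
  shows "cell mk S a \<in> sets lborel" "emeasure lborel (cell mk S a) < \<infinity>"
    "measure lborel (cell mk S a)
       = (\<Prod>j\<in>UNIV. grid mk (sample_coords S j) (a j + 1) - grid mk (sample_coords S j) (a j))"
proof -
  have "grid mk (sample_coords S j) (a j) \<le> grid mk (sample_coords S j) (a j + 1)" for j
    using assms by (intro grid_Suc_mono) (auto simp: sample_coords_def)
  from half_open_box_cart[OF this] show "cell mk S a \<in> sets lborel"
    "emeasure lborel (cell mk S a) < \<infinity>"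
    "measure lborel (cell mk S a)
       = (\<Prod>j\<in>UNIV. grid mk (sample_coords S j) (a j + 1) - grid mk (sample_coords S j) (a j))"
    unfolding cell_def by auto
qed

lemma part_dens_trivial: "length S \<le> 1 \<Longrightarrow> part_dens n mk S = (\<lambda>_. 0)"
  by (auto simp: part_dens_def Let_def)

lemma part_dens_eq_sum_cells:
  fixes S :: "(real^'d::finite) list"
  assumes "mk > 0" "length S \<ge> 2"
  shows "part_dens n mk S x
         = (\<Sum>a\<in>Pi\<^sub>E UNIV (\<lambda>_. {..length S}). indicator (cell mk S a) x * cell_value n mk S a)"
proof -
  define A :: "('d \<Rightarrow> nat) set" where "A = Pi\<^sub>E UNIV (\<lambda>_. {..length S})"
  define incell where "incell = (\<lambda>a::'d \<Rightarrow> nat. \<forall>j. a j \<le> length S \<and>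
     grid mk (sample_coords S j) (a j) < x $ j \<and> x $ j \<le> grid mk (sample_coords S j) (a j + 1))"
  have incell_iff: "incell a \<longleftrightarrow> a \<in> A \<and> x \<in> cell mk S a" for a
    by (auto simp: incell_def A_def cell_def PiE_UNIV_domain)
  have unique: "a = b" if "incell a" "incell b" for a b
  proof
    fix j
    show "a j = b j"
      using that assms unfolding incell_def
      by (intro grid_cell_unique[OF assms(1), of "sample_coords S j"]) (auto simp: sample_coords_def)
  qed
  have "part_dens n mk S x = (if \<exists>a. incell a then cell_value n mk S (THE a. incell a) else 0)"
    using assms unfolding part_dens_def Let_def incell_def cell_value_def sample_coords_def by simp
  also have "\<dots> = (\<Sum>a\<in>A. indicator (cell mk S a) x * cell_value n mk S a)"
  proof (cases "\<exists>a. incell a")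
    case True
    then obtain a0 where a0: "incell a0" by blast
    have "(\<Sum>a\<in>A. indicator (cell mk S a) x * cell_value n mk S a)
        = (\<Sum>a\<in>A. if a = a0 then cell_value n mk S a else 0)"
      using a0 unique incell_iff by (intro sum.cong) (auto simp: indicator_def)
    also have "\<dots> = cell_value n mk S a0"
      using a0 incell_iff by (simp add: A_def finite_PiE)
    finally show ?thesis
      using True a0 unique by (simp add: the_equality)
  next
    case False
    then have "(\<Sum>a\<in>A. indicator (cell mk S a) x * cell_value n mk S a) = 0"
      using incell_iff by (intro sum.neutral) auto
    then show ?thesis using False by simp
  qed
  finally show ?thesis unfolding A_def .
qed

lemma part_dens_integrable_and_integral:
  fixes S :: "(real^'d::finite) list"
  assumes "mk > 0" "length S \<ge> 2"
  shows "integrable lborel (part_dens n mk S)"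
    and "integral\<^sup>L lborel (part_dens n mk S)
         = real (length S) / real n * (\<Prod>j\<in>UNIV. \<Sum>c\<le>length S. spacing_mass mk (sample_coords S j) c)"
proof -
  define A :: "('d \<Rightarrow> nat) set" where "A = Pi\<^sub>E UNIV (\<lambda>_. {..length S})"
  have S: "S \<noteq> []" using assms(2) by auto
  have pd: "part_dens n mk S = (\<lambda>x. \<Sum>a\<in>A. indicator (cell mk S a) x * cell_value n mk S a)"
    using part_dens_eq_sum_cells[OF assms] by (auto simp: A_def)
  have cell_integrable: "integrable lborel (\<lambda>x. indicator (cell mk S a) x * cell_value n mk S a)"
    if "a \<in> A" for a
    using cell_lborel[OF assms(1) S] that by (auto simp: A_def intro!: integrable_real_indicator)
  show "integrable lborel (part_dens n mk S)"
    unfolding pd by (intro Bochner_Integration.integrable_sum cell_integrable)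
  have "measure lborel (cell mk S a) * cell_value n mk S a
        = real (length S) / real n * (\<Prod>j\<in>UNIV. spacing_mass mk (sample_coords S j) (a j))"
    if "a \<in> A" for a
  proof -
    have "measure lborel (cell mk S a) * cell_value n mk S a
        = real (length S) / real n * ((\<Prod>j\<in>UNIV. 2 * real mk / (real (length S) *
            (ostat (sample_coords S j) (int (a j) + int mk) - ostat (sample_coords S j) (int (a j) - int mk)))) *
          (\<Prod>j\<in>UNIV. grid mk (sample_coords S j) (a j + 1) - grid mk (sample_coords S j) (a j)))"
      unfolding cell_value_def cell_lborel(3)[OF assms(1) S that[unfolded A_def]]
      by (simp only: mult.assoc mult.commute mult.left_commute)
    also have "\<dots> = real (length S) / real n * (\<Prod>j\<in>UNIV. spacing_mass mk (sample_coords S j) (a j))"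
      unfolding prod.distrib[symmetric]
      by (intro arg_cong[where f="\<lambda>p. real (length S) / real n * p"] prod.cong) (simp_all add: spacing_mass_def sample_coords_def)
    finally show ?thesis .
  qed
  moreover have "integral\<^sup>L lborel (part_dens n mk S)
      = (\<Sum>a\<in>A. measure lborel (cell mk S a) * cell_value n mk S a)"
    unfolding pd using cell_lborel(1,2)[OF assms(1) S]
    by (subst Bochner_Integration.integral_sum) (auto intro: cell_integrable simp: A_def)
  ultimately have "integral\<^sup>L lborel (part_dens n mk S)
      = (\<Sum>a\<in>A. real (length S) / real n * (\<Prod>j\<in>UNIV. spacing_mass mk (sample_coords S j) (a j)))"
    by simp
  also have "\<dots> = real (length S) / real n * (\<Prod>j\<in>UNIV. \<Sum>c\<le>length S. spacing_mass mk (sample_coords S j) c)"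
    by (simp add: A_def sum_distrib_left prod_sum_PiE)
  finally show "integral\<^sup>L lborel (part_dens n mk S)
      = real (length S) / real n * (\<Prod>j\<in>UNIV. \<Sum>c\<le>length S. spacing_mass mk (sample_coords S j) c)" .
qed

lemma integrable_part_dens:
  fixes S :: "(real^'d::finite) list"
  assumes "mk > 0"
  shows "integrable lborel (part_dens n mk S)"
  using part_dens_integrable_and_integral(1)[OF assms] part_dens_trivial[of S]
  by (cases "length S \<ge> 2") auto

lemma integral_part_dens_le:
  fixes S :: "(real^'d::finite) list"
  assumes "mk > 0"
  shows "integral\<^sup>L lborel (part_dens n mk S)
         \<le> real (length S) / real n * (1 + 4 * real mk / real (length S)) ^ CARD('d)"
proof (cases "length S \<ge> 2")
  case True
  then have "S \<noteq> []" by auto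
  have "(\<Prod>j\<in>UNIV. \<Sum>c\<le>length S. spacing_mass mk (sample_coords S j) c)
        \<le> (\<Prod>j\<in>(UNIV::'d set). 1 + 4 * real mk / real (length S))"
    using spacing_mass_sum_le[OF assms, of "sample_coords S _"] spacing_mass_nonneg[OF assms, of "sample_coords S _"]
      True \<open>S \<noteq> []\<close>
    by (intro prod_mono) (auto simp: sample_coords_def intro!: sum_nonneg)
  then have "real (length S) / real n * (\<Prod>j\<in>UNIV. \<Sum>c\<le>length S. spacing_mass mk (sample_coords S j) c)
      \<le> real (length S) / real n * (1 + 4 * real mk / real (length S)) ^ CARD('d)"
    by (intro mult_left_mono) simp_all
  then show ?thesis
    using part_dens_integrable_and_integral(2)[OF assms True] by simp
qed (simp add: part_dens_trivial)

lemma integral_part_dens_ge: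
  fixes S :: "(real^'d::finite) list"
  assumes "mk > 0" "\<And>j. distinct (sample_coords S j)"
  shows "(real (length S) - real CARD('d)) / real n \<le> integral\<^sup>L lborel (part_dens n mk S)"
proof (cases "length S \<ge> 2")
  case True
  define N where "N = real (length S)"
  have N: "N \<ge> 2" using True by (simp add: N_def)
  have "1 - real CARD('d) / N \<le> (1 - 1 / N) ^ CARD('d)"
    using Bernoulli_inequality[of "- 1 / N" "CARD('d)"] N by simp
  also have "\<dots> = (\<Prod>j\<in>(UNIV::'d set). 1 - 1 / N)" by simp
  also have "\<dots> \<le> (\<Prod>j\<in>UNIV. \<Sum>c\<le>length S. spacing_mass mk (sample_coords S j) c)"
    using spacing_mass_sum_ge[OF assms(1) _ assms(2)] N True
    by (intro prod_mono) (auto simp: N_def sample_coords_def divide_le_eq_1)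
  finally have "N / real n * (1 - real CARD('d) / N)
      \<le> N / real n * (\<Prod>j\<in>UNIV. \<Sum>c\<le>length S. spacing_mass mk (sample_coords S j) c)"
    by (intro mult_left_mono) (simp_all add: N_def)
  moreover have "N / real n * (1 - real CARD('d) / N) = (N - real CARD('d)) / real n"
    using N by (cases "n = 0") (simp_all add: field_simps)
  ultimately show ?thesis
    unfolding part_dens_integrable_and_integral(2)[OF assms(1) True] N_def[symmetric] by linarith
next
  case False
  moreover have "1 \<le> CARD('d)" by (simp add: Suc_le_eq)
  ultimately have "real (length S) \<le> real CARD('d)" by linarith
  then show ?thesis using False by (simp add: part_dens_trivial divide_nonpos_nonneg)
qed

section \<open>Bounds for the integral of the estimator\<close>

lemma sum_length_filter_partition:
  assumes "finite P" "\<And>v. v \<in> set ys \<Longrightarrow> \<kappa> v \<in> P"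
  shows "(\<Sum>p\<in>P. length (filter (\<lambda>v. \<kappa> v = p) ys)) = length ys"
  using assms(2)
proof (induction ys)
  case (Cons y ys)
  have "(\<Sum>p\<in>P. length (filter (\<lambda>v. \<kappa> v = p) (y # ys)))
      = (\<Sum>p\<in>P. (if \<kappa> y = p then 1 else 0)) + (\<Sum>p\<in>P. length (filter (\<lambda>v. \<kappa> v = p) ys))"
    by (subst sum.distrib[symmetric], rule sum.cong) auto
  also have "(\<Sum>p\<in>P. (if \<kappa> y = p then 1 else 0)) = (1::nat)"
    using Cons.prems assms(1) by (simp add: sum.delta)
  finally show ?case using Cons by simp
qed simp

definition part_samples :: "nat \<Rightarrow> (real^'d) list \<Rightarrow> ('d \<Rightarrow> nat) \<Rightarrow> (real^'d) list" where
  "part_samples l xs p = filter (\<lambda>v. bin_index l xs v = p) xs"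

lemma fhat_eq_sum_parts:
  fixes xs :: "(real^'d::finite) list"
  shows "fhat l m xs = (\<lambda>x. \<Sum>p\<in>Pi\<^sub>E UNIV (\<lambda>_. {..<l}).
     part_dens (length xs) (m (length (part_samples l xs p))) (part_samples l xs p) x)"
proof -
  have "{p::'d \<Rightarrow> nat. \<forall>j. p j < l} = Pi\<^sub>E UNIV (\<lambda>_. {..<l})"
    by (auto simp: PiE_UNIV_domain)
  then show ?thesis
    unfolding fhat_def part_samples_def Let_def by simp
qed

lemma sum_length_part_samples:
  assumes "l \<ge> 1"
  shows "(\<Sum>p\<in>Pi\<^sub>E UNIV (\<lambda>_. {..<l}). length (part_samples l xs p)) = length xs"
proof -
  have "bin_index l xs v j < l" for v j
    using assms unfolding bin_index_def Let_def by (auto simp: nat_less_iff)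
  then show ?thesis
    unfolding part_samples_def by (intro sum_length_filter_partition finite_PiE) (auto simp: PiE_UNIV_domain)
qed

lemma integral_fhat_eq_sum_parts:
  fixes xs :: "(real^'d::finite) list"
  assumes "\<And>c. m c > 0"
  shows "integral\<^sup>L lborel (fhat l m xs) = (\<Sum>p\<in>Pi\<^sub>E UNIV (\<lambda>_. {..<l}).
           integral\<^sup>L lborel (part_dens (length xs) (m (length (part_samples l xs p))) (part_samples l xs p)))"
  unfolding fhat_eq_sum_parts using integrable_part_dens[OF assms]
  by (auto intro!: Bochner_Integration.integral_sum)

lemma integral_fhat_le:
  fixes xs :: "(real^'d::finite) list"
  assumes "\<And>c. m c > 0"
  shows "integral\<^sup>L lborel (fhat l m xs) \<le> (\<Sum>p\<in>Pi\<^sub>E UNIV (\<lambda>_. {..<l}).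
           real (length (part_samples l xs p)) / real (length xs) *
           (1 + 4 * real (m (length (part_samples l xs p))) / real (length (part_samples l xs p))) ^ CARD('d))"
  unfolding integral_fhat_eq_sum_parts[OF assms]
  by (intro sum_mono integral_part_dens_le assms)

lemma integral_fhat_ge:
  fixes xs :: "(real^'d::finite) list"
  assumes "\<And>c. m c > 0" "l \<ge> 1" "\<And>j. distinct (sample_coords xs j)"
  shows "(real (length xs) - real CARD('d) * real l ^ CARD('d)) / real (length xs)
         \<le> integral\<^sup>L lborel (fhat l m xs)"
proof -
  define P :: "('d \<Rightarrow> nat) set" where "P = Pi\<^sub>E UNIV (\<lambda>_. {..<l})"
  have "(real (length xs) - real CARD('d) * real l ^ CARD('d)) / real (length xs)
      = (\<Sum>p\<in>P. (real (length (part_samples l xs p)) - real CARD('d)) / real (length xs))"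
    using sum_length_part_samples[OF assms(2), of xs, folded P_def, THEN arg_cong[where f=real]]
    by (simp add: P_def sum_divide_distrib[symmetric] sum_subtractf card_PiE)
  also have "\<dots> \<le> integral\<^sup>L lborel (fhat l m xs)"
    unfolding integral_fhat_eq_sum_parts[OF assms(1)] P_def
    using assms(3)
    by (intro sum_mono integral_part_dens_ge assms(1))
      (auto simp: sample_coords_def part_samples_def intro: distinct_map_filter)
  finally show ?thesis .
qed

lemma eventually_le_imp_affine_bound:
  fixes U :: "nat \<Rightarrow> real"
  assumes "eventually (\<lambda>c. U c \<le> B) sequentially"
  shows "\<exists>C. \<forall>c. real c * U c \<le> B * real c + C"
proof -
  obtain K where K: "\<And>c. c \<ge> K \<Longrightarrow> U c \<le> B"
    using assms by (auto simp: eventually_sequentially)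
  define C where "C = (\<Sum>c<K. \<bar>real c * U c - B * real c\<bar>)"
  have "real c * U c \<le> B * real c + C" for c
  proof (cases "c \<ge> K")
    case True
    have "real c * U c \<le> B * real c"
      using mult_left_mono[OF K[OF True], of "real c"] by (simp add: mult.commute)
    moreover have "0 \<le> C" by (simp add: C_def sum_nonneg)
    ultimately show ?thesis by linarith
  next
    case False
    then have "\<bar>real c * U c - B * real c\<bar> \<le> C"
      unfolding C_def by (intro member_le_sum) auto
    then show ?thesis by linarith
  qed
  then show ?thesis by blast
qed

lemma integral_fhat_le_affine:
  fixes xs :: "(real^'d::finite) list"
  assumes "\<And>c. m c > 0" "l \<ge> 1" "xs \<noteq> []"
    and "\<And>c. real c * (1 + 4 * real (m c) / real c) ^ CARD('d) \<le> B * real c + C"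
  shows "integral\<^sup>L lborel (fhat l m xs) \<le> B + real l ^ CARD('d) * C / real (length xs)"
proof -
  define P :: "('d \<Rightarrow> nat) set" where "P = Pi\<^sub>E UNIV (\<lambda>_. {..<l})"
  define k where "k p = length (part_samples l xs p)" for p
  have "integral\<^sup>L lborel (fhat l m xs)
      \<le> (\<Sum>p\<in>P. real (k p) * (1 + 4 * real (m (k p)) / real (k p)) ^ CARD('d) / real (length xs))"
    using integral_fhat_le[where l=l and xs=xs, OF assms(1)] by (simp add: P_def k_def)
  also have "\<dots> \<le> (\<Sum>p\<in>P. (B * real (k p) + C) / real (length xs))"
    by (intro sum_mono divide_right_mono assms(4)) simp
  also have "\<dots> = (B * real (\<Sum>p\<in>P. k p) + real (card P) * C) / real (length xs)"
    by (simp add: sum_divide_distrib[symmetric] sum.distrib sum_distrib_left)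
  also have "\<dots> = B + real l ^ CARD('d) * C / real (length xs)"
    using sum_length_part_samples[OF assms(2), of xs] assms(3)
    by (simp add: P_def k_def card_PiE add_divide_distrib)
  finally show ?thesis .
qed

lemma eventually_integral_fhat_gt:
  fixes xs :: "nat \<Rightarrow> (real^'d::finite) list"
  assumes len: "\<And>n. length (xs n) = n" and dist: "\<And>n j. distinct (sample_coords (xs n) j)"
    and l: "\<And>n. l n \<ge> 1" "(\<lambda>n. real (l n) ^ CARD('d) / real n) \<longlonglongrightarrow> 0"
    and m: "\<And>c. m c > 0"
    and "a < 1"
  shows "eventually (\<lambda>n. a < integral\<^sup>L lborel (fhat (l n) m (xs n))) sequentially"
proof -
  have "(\<lambda>n. 1 - real CARD('d) * (real (l n) ^ CARD('d) / real n)) \<longlonglongrightarrow> 1 - real CARD('d) * 0"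
    by (intro tendsto_intros l)
  then have "eventually (\<lambda>n. a < 1 - real CARD('d) * (real (l n) ^ CARD('d) / real n)) sequentially"
    using \<open>a < 1\<close> by (simp add: order_tendsto_iff)
  then show ?thesis
    using eventually_gt_at_top[of 0]
  proof eventually_elim
    case (elim n)
    then show ?case
      using integral_fhat_ge[where xs="xs n" and l="l n" and m=m, OF m l(1) dist] len[of n]
      by (simp add: diff_divide_distrib)
  qed
qed

lemma eventually_integral_fhat_lt:
  fixes xs :: "nat \<Rightarrow> (real^'d::finite) list"
  assumes len: "\<And>n. length (xs n) = n"
    and l: "\<And>n. l n \<ge> 1" "(\<lambda>n. real (l n) ^ CARD('d) / real n) \<longlonglongrightarrow> 0"
    and m: "\<And>c. m c > 0" "(\<lambda>c. real (m c) / real c) \<longlonglongrightarrow> 0"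
    and "1 < a"
  shows "eventually (\<lambda>n. integral\<^sup>L lborel (fhat (l n) m (xs n)) < a) sequentially"
proof -
  define e where "e = (a - 1) / 2"
  have e: "e > 0" using \<open>1 < a\<close> by (simp add: e_def)
  have "(\<lambda>c. (1 + 4 * (real (m c) / real c)) ^ CARD('d)) \<longlonglongrightarrow> (1 + 4 * 0) ^ CARD('d)"
    by (intro tendsto_intros m)
  then have "eventually (\<lambda>c. (1 + 4 * real (m c) / real c) ^ CARD('d) < 1 + e) sequentially"
    using e by (simp add: order_tendsto_iff)
  then have "eventually (\<lambda>c. (1 + 4 * real (m c) / real c) ^ CARD('d) \<le> 1 + e) sequentially"
    by (rule eventually_mono) simp
  then obtain C where C: "\<And>c. real c * (1 + 4 * real (m c) / real c) ^ CARD('d) \<le> (1 + e) * real c + C"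
    using eventually_le_imp_affine_bound by meson
  have "(\<lambda>n. real (l n) ^ CARD('d) / real n * C) \<longlonglongrightarrow> 0 * C"
    by (intro tendsto_intros l)
  then have "eventually (\<lambda>n. real (l n) ^ CARD('d) / real n * C < e) sequentially"
    using e by (simp add: order_tendsto_iff)
  then show ?thesis
    using eventually_gt_at_top[of 0]
  proof eventually_elim
    case (elim n)
    then have "xs n \<noteq> []" using len[of n] by auto
    from integral_fhat_le_affine[where l="l n" and m=m, OF m(1) l(1) this C]
    have "integral\<^sup>L lborel (fhat (l n) m (xs n)) \<le> 1 + e + real (l n) ^ CARD('d) / real n * C"
      using len[of n] by simp
    moreover have "a = 1 + 2 * e" by (simp add: e_def field_simps)
    ultimately show ?case using elim by linarith
  qed
qed

lemma integral_fhat_tendsto_1: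
  fixes xs :: "nat \<Rightarrow> (real^'d::finite) list"
  assumes "\<And>n. length (xs n) = n" "\<And>n j. distinct (sample_coords (xs n) j)"
    and "\<And>n. l n \<ge> 1" "(\<lambda>n. real (l n) ^ CARD('d) / real n) \<longlonglongrightarrow> 0"
    and "\<And>c. m c > 0" "(\<lambda>c. real (m c) / real c) \<longlonglongrightarrow> 0"
  shows "(\<lambda>n. integral\<^sup>L lborel (fhat (l n) m (xs n))) \<longlonglongrightarrow> 1"
  using eventually_integral_fhat_gt[OF assms(1-5)] eventually_integral_fhat_lt[OF assms(1,3-6)]
  by (rule order_tendstoI)

section \<open>Ties occur with probability zero\<close>

lemma (in prob_space) AE_neq_if_indep_var_no_atoms:
  fixes Y1 Y2 :: "'a \<Rightarrow> real"
  assumes indep: "indep_var borel Y1 borel Y2"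
    and no_atoms: "\<And>c. emeasure (distr M borel Y2) {c} = 0"
  shows "AE \<omega> in M. Y1 \<omega> \<noteq> Y2 \<omega>"
proof -
  have Y1: "random_variable borel Y1" and Y2: "random_variable borel Y2"
    using indep by (blast dest: indep_var_rv1 indep_var_rv2)+
  interpret Y2: prob_space "distr M borel Y2"
    using Y2 by (rule prob_space_distr)
  define diag where "diag = {p::real \<times> real. fst p = snd p}"
  have diag: "diag \<in> sets (borel \<Otimes>\<^sub>M borel)"
    unfolding diag_def borel_prod by (intro borel_closed closed_Collect_eq continuous_intros)
  have "emeasure M {\<omega>\<in>space M. Y1 \<omega> = Y2 \<omega>}
      = emeasure (distr M (borel \<Otimes>\<^sub>M borel) (\<lambda>\<omega>. (Y1 \<omega>, Y2 \<omega>))) diag"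
    using diag Y1 Y2 by (subst emeasure_distr) (auto simp: diag_def intro!: arg_cong2[where f=emeasure])
  also have "\<dots> = emeasure (distr M borel Y1 \<Otimes>\<^sub>M distr M borel Y2) diag"
    using indep by (simp add: indep_var_distribution_eq)
  also have "\<dots> = (\<integral>\<^sup>+y. emeasure (distr M borel Y2) (Pair y -` diag) \<partial>distr M borel Y1)"
    using diag by (subst Y2.emeasure_pair_measure_alt) auto
  also have "\<dots> = 0"
    using no_atoms by (simp add: diag_def vimage_def)
  finally have "emeasure M {\<omega>\<in>space M. Y1 \<omega> = Y2 \<omega>} = 0" .
  moreover have "{\<omega>\<in>space M. Y1 \<omega> = Y2 \<omega>} \<in> sets M"
    using Y1 Y2 by measurable
  ultimately show ?thesis
    by (subst AE_iff_null) auto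
qed

lemma coordinate_hyperplane_null: "{x::real^'d. x $ j = c} \<in> null_sets lborel"
proof -
  have "negligible {x::real^'d. x \<bullet> axis j 1 = c}"
    by (rule negligible_standard_hyperplane) simp
  then show ?thesis
    by (simp add: cart_eq_inner_axis null_sets_completion_iff negligible_iff_null_sets)
qed

lemma emeasure_distr_coordinate_singleton:
  fixes X :: "'a \<Rightarrow> real^'d"
  assumes "distributed M lborel X g"
  shows "emeasure (distr M borel (\<lambda>\<omega>. X \<omega> $ j)) {c} = 0"
proof -
  have X: "X \<in> borel_measurable M" and g: "g \<in> borel_measurable lborel"
    using assms by (auto simp: distributed_def)
  have "distr M borel (\<lambda>\<omega>. X \<omega> $ j) = distr (distr M lborel X) borel (\<lambda>x. x $ j)"
    using X by (subst distr_distr) (auto simp: comp_def)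
  also have "distr M lborel X = density lborel g"
    using distributed_distr_eq_density[OF assms] .
  finally have "emeasure (distr M borel (\<lambda>\<omega>. X \<omega> $ j)) {c} = emeasure (density lborel g) {x. x $ j = c}"
    by (simp add: emeasure_distr vimage_def)
  also have "\<dots> = 0"
    using coordinate_hyperplane_null[of j c] g
    by (subst emeasure_density) (auto intro!: nn_integral_null_set)
  finally show ?thesis .
qed

lemma (in prob_space) AE_distinct_coordinates:
  fixes X :: "nat \<Rightarrow> 'a \<Rightarrow> real^'d"
  assumes indep: "indep_vars (\<lambda>_. borel) X UNIV" and distr: "\<And>i. distributed M lborel (X i) (g i)"
  shows "AE \<omega> in M. \<forall>i i' j. i \<noteq> i' \<longrightarrow> X i \<omega> $ j \<noteq> X i' \<omega> $ j"
proof -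
  have "AE \<omega> in M. X i \<omega> $ j \<noteq> X i' \<omega> $ j" if "i \<noteq> i'" for i i' j
  proof (rule AE_neq_if_indep_var_no_atoms)
    have "indep_var (PiM {i} (\<lambda>_. borel)) (\<lambda>\<omega>. restrict (\<lambda>i. X i \<omega>) {i})
                   (PiM {i'} (\<lambda>_. borel)) (\<lambda>\<omega>. restrict (\<lambda>i. X i \<omega>) {i'})"
      using that by (intro indep_var_restrict[OF indep]) auto
    then have "indep_var borel ((\<lambda>F. F i $ j) \<circ> (\<lambda>\<omega>. restrict (\<lambda>i. X i \<omega>) {i}))
                   borel ((\<lambda>F. F i' $ j) \<circ> (\<lambda>\<omega>. restrict (\<lambda>i. X i \<omega>) {i'}))"
      by (rule indep_var_compose) (auto intro!: measurable_compose[OF measurable_component_singleton])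
    then show "indep_var borel (\<lambda>\<omega>. X i \<omega> $ j) borel (\<lambda>\<omega>. X i' \<omega> $ j)"
      by (simp add: comp_def)
  qed (rule emeasure_distr_coordinate_singleton[OF distr])
  then show ?thesis
    by (simp add: AE_all_countable eventually_all_finite)
qed

theorem proposition9:
  fixes M :: "'a measure" and X :: "nat \<Rightarrow> 'a \<Rightarrow> real^'d"
    and f :: "real^'d \<Rightarrow> real" and l :: "nat \<Rightarrow> nat" and m :: "nat \<Rightarrow> nat"
  assumes "prob_space M"
    and "prob_space.indep_vars M (\<lambda>_. borel) X UNIV"
    and "\<And>i. distributed M lborel (X i) (\<lambda>x. ennreal (f x))"
    and "continuous_on UNIV f" and "\<And>x. f x \<ge> 0"
    and "\<And>n. l n \<ge> 1"
    and "(\<lambda>n. real (l n) ^ CARD('d)) \<in> o(\<lambda>n. real n)"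
    and "\<And>c. m c > 0"
    and "(\<lambda>c. real (m c) / real c) \<longlonglongrightarrow> 0"
  shows "AE \<omega> in M. (\<lambda>n. integral\<^sup>L lborel (fhat (l n) m (map (\<lambda>v. X v \<omega>) [0..<n])))
                      \<longlonglongrightarrow> 1"
proof -
  interpret prob_space M by fact
  have "AE \<omega> in M. \<forall>i i' j. i \<noteq> i' \<longrightarrow> X i \<omega> $ j \<noteq> X i' \<omega> $ j"
    using AE_distinct_coordinates[OF assms(2,3)] .
  then show ?thesis
  proof eventually_elim
    case (elim \<omega>)
    then have "distinct (sample_coords (map (\<lambda>v. X v \<omega>) [0..<n]) j)" for n j
      by (auto simp: sample_coords_def distinct_map inj_on_def)
    then show ?case
      using smalloD_tendsto[OF assms(7)] assms(6,8,9) by (intro integral_fhat_tendsto_1) auto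
  qed
qed

end
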